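(* Consider the lattice Boltzmann scheme and initialisation $w$ described in the context, and let $H\in\mathbb{N}^*$. Assume that (i) the Fourier symbol of $w_1$ satisfies $\hat w_1(\xi\Delta x)=1+O(|\xi\Delta x|^{H+1})$ as $|\xi\Delta x|\to0$ (equivalently $\omega_1^{(0)}=1$ and $\omega_1^{(h)}=0$ for $h\in\{1,\dots,H\}$); and (ii) for every $n\in\{1,\dots,Q\}$ the modified equation of the $n$-th starting scheme matches that of the bulk finite difference scheme up to order $H$, i.e. $\log\hat g_{[n]}(\xi\Delta x)-n\log\hat g_1(\xi\Delta x)=O(|\xi\Delta x|^{H+1})$. Then for every $n>Q$ the modified equation of the $n$-th starting scheme also matches that of the bulk finite difference scheme up to order $H$, i.e. $\hat g_{[n]}(\xi\Delta x)=\hat g_1(\xi\Delta x)^n+O(|\xi\Delta x|^{H+1})$.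
   Context: Fix $d\ge1$, $q\ge1$, velocities $c_1,\dots,c_q\in\mathbb{Z}^d$, invertible $M$, $S=\mathrm{diag}(s_1,\dots,s_q)$ with $s_i\in(0,2]$ for $i\ge2$, $\epsilon\in\mathbb{R}^q$, $\epsilon_1=1$; $K=I-S(I-\epsilon e_1^T)$; acoustic scaling $\Delta t=\Delta x/\lambda$. Shifts $(x_\ell\phi)(x)=\phi(x-\Delta xe_\ell)$; $T=M\mathrm{diag}(x^{c_1},\dots,x^{c_q})M^{-1}$, $E=TK$. $Q$ is the number of $i\in\{2,\dots,q\}$ with $s_i\ne1$. The initialisation is $m(0,x)=w\,m_1^\circ(x)$ with $w$ a vector of Laurent polynomials in the shifts, $w_1$ having asymptotic expansion $\omega_1^{(0)}+\sum_{h\ge1}\Delta x^h\omega_1^{(h)}$ on smooth functions. Fourier symbols: for a Laurent polynomial operator $\mathsf{d}$ in the shifts, $\hat{\mathsf d}(\xi\Delta x)$ is obtained by substituting $x_\ell\mapsto e^{-i\xi_\ell\Delta x}$, $\xi\in\mathbb{R}^d$. The bulk finite difference scheme $z^{Q+1-q}\det(zI-E)m_1=0$ has amplification polynomial $\hat\Phi(z,\xi\Delta x)=z^{Q+1-q}\det(zI-\hat E(\xi\Delta x))$; $\hat g_1(\xi\Delta x)$ denotes its root with $\hat g_1(\xi\Delta x)=1+O(|\xi\Delta x|)$ as $|\xi\Delta x|\to0$ (the consistency root), and the modified equation of the bulk scheme is $\partial_t=\frac{\lambda}{\Delta x}\log\hat g_1(\xi\Delta x)$. For $n\in\mathbb{N}^*$,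 $\hat g_{[n]}(\xi\Delta x)=(\hat E(\xi\Delta x)^n\hat w(\xi\Delta x))_1$ is the symbol of the $n$-th starting scheme $m_1(n\Delta t,\cdot)=(E^nw)_1m_1^\circ$, whose modified equation is $\partial_t=\frac{\lambda}{n\Delta x}\log\hat g_{[n]}(\xi\Delta x)$ as $|\xi\Delta x|\to0$. *)

theory Defs
  imports "HOL-Analysis.Analysis" "HOL-Library.Landau_Symbols" "Jordan_Normal_Form.Determinant"
begin

text \<open>Lattice Boltzmann scheme, Fourier side. Indices of the q moments are 0..q-1,
  index 0 playing the role of index 1 (the conserved moment) in the paper.\<close>

text \<open>Fourier symbol of the shift monomial x^c (c in Z^d): x_l maps to exp(-i theta_l).\<close>
definition shift_symbol :: "int^'d \<Rightarrow> real^'d \<Rightarrow> complex" where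
  "shift_symbol c \<theta> = cis (- (\<Sum>l\<in>UNIV. of_int (c $ l) * \<theta> $ l))"

definition cmat :: "real mat \<Rightarrow> complex mat" where
  "cmat A = map_mat complex_of_real A"

definition minv :: "real mat \<Rightarrow> real mat" where
  "minv A = (SOME B. inverts_mat A B \<and> inverts_mat B A)"

text \<open>Collision matrix K = I - S (I - epsilon e_1^T), S = diag(s).\<close>
definition Kmat :: "nat \<Rightarrow> (nat \<Rightarrow> real) \<Rightarrow> (nat \<Rightarrow> real) \<Rightarrow> real mat" where
  "Kmat q s \<epsilon> = mat q q (\<lambda>(i,j). (if i = j then 1 else 0)
       - s i * ((if i = j then 1 else 0) - \<epsilon> i * (if j = 0 then 1 else 0)))"

definition Ehat :: "nat \<Rightarrow> (nat \<Rightarrow> int^'d) \<Rightarrow> real mat \<Rightarrow> (nat \<Rightarrow> real) \<Rightarrow> (nat \<Rightarrow> real)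
    \<Rightarrow> real^'d \<Rightarrow> complex mat" where
  "Ehat q c M s \<epsilon> \<theta> =
     cmat M * mat_diag q (\<lambda>i. shift_symbol (c i) \<theta>) * cmat (minv M) * cmat (Kmat q s \<epsilon>)"

text \<open>Q = number of i in 2..q (here 1..q-1) with s_i \<noteq> 1.\<close>
definition Qnum :: "nat \<Rightarrow> (nat \<Rightarrow> real) \<Rightarrow> nat" where
  "Qnum q s = card {i. 1 \<le> i \<and> i < q \<and> s i \<noteq> 1}"

definition Phihat :: "nat \<Rightarrow> (nat \<Rightarrow> int^'d) \<Rightarrow> real mat \<Rightarrow> (nat \<Rightarrow> real) \<Rightarrow> (nat \<Rightarrow> real)
    \<Rightarrow> complex \<Rightarrow> real^'d \<Rightarrow> complex" where
  "Phihat q c M s \<epsilon> z \<theta> =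
     z powi (int (Qnum q s) + 1 - int q) * det (z \<cdot>\<^sub>m 1\<^sub>m q - Ehat q c M s \<epsilon> \<theta>)"

text \<open>Laurent polynomials in the shifts: finitely supported coefficient maps
  int^d \<Rightarrow> real; their Fourier symbol.\<close>
definition laurent_symbol :: "(int^'d \<Rightarrow> real) \<Rightarrow> real^'d \<Rightarrow> complex" where
  "laurent_symbol p \<theta> = (\<Sum>k\<in>{k. p k \<noteq> 0}. complex_of_real (p k) * shift_symbol k \<theta>)"

definition what :: "nat \<Rightarrow> (nat \<Rightarrow> int^'d \<Rightarrow> real) \<Rightarrow> real^'d \<Rightarrow> complex vec" where
  "what q w \<theta> = vec q (\<lambda>i. laurent_symbol (w i) \<theta>)"

definition gstart :: "nat \<Rightarrow> (nat \<Rightarrow> int^'d) \<Rightarrow> real mat \<Rightarrow> (nat \<Rightarrow> real) \<Rightarrow> (nat \<Rightarrow> real)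
    \<Rightarrow> (nat \<Rightarrow> int^'d \<Rightarrow> real) \<Rightarrow> nat \<Rightarrow> real^'d \<Rightarrow> complex" where
  "gstart q c M s \<epsilon> w n \<theta> = ((Ehat q c M s \<epsilon> \<theta> ^\<^sub>m n) *\<^sub>v what q w \<theta>) $ 0"

end

theory Submission
  imports Defs "Jordan_Normal_Form.Schur_Decomposition" "HOL-Complex_Analysis.Weierstrass_Factorization"
begin

(* The columns of K whose index i \<ge> 2 has s_i = 1 vanish, so only the Q + 1 moments
   with index 1 or with s_i \<noteq> 1 drive the dynamics: g_[n] is the first component of the n-th
   orbit element of a (Q+1)x(Q+1) matrix A extracted from E. By the Schur decomposition such an
   orbit is annihilated by the difference operator \<Prod>(S - \<lambda>), S the shift in n and \<lambda> running
   over the eigenvalues of A; g_1 is one of them and the other Q stay bounded as \<xi>\<Delta>x \<rightarrow> 0.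
   Since g_1^n is also annihilated, so is g_[n] - g_1^n. Applying the Q factors other than
   S - g_1 yields a sequence that is multiplied by g_1 at each step and is O(|\<xi>\<Delta>x|^(H+1)) at
   n = 0, because g_[n] - g_1^n is for n = 0..Q by (i) and (ii); hence it is O(|\<xi>\<Delta>x|^(H+1))
   for all n, and undoing the Q bounded factors one at a time carries the estimate over to
   g_[n] - g_1^n for all n. *)

section \<open>Difference operators built from the shift\<close>

definition shift_sub :: "'a::comm_ring_1 \<Rightarrow> (nat \<Rightarrow> 'a) \<Rightarrow> nat \<Rightarrow> 'a" where
  "shift_sub a f n = f (Suc n) - a * f n"

(* shift_subs as is the operator \<Prod>(S - a), a \<in> as, with the shift S f n = f (Suc n). *)
definition shift_subs :: "'a::comm_ring_1 list \<Rightarrow> (nat \<Rightarrow> 'a) \<Rightarrow> nat \<Rightarrow> 'a" where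
  "shift_subs as f = foldr shift_sub as f"

lemma shift_subs_Nil [simp]: "shift_subs [] f = f"
  by (simp add: shift_subs_def)

lemma shift_subs_Cons [simp]: "shift_subs (a # as) f = shift_sub a (shift_subs as f)"
  by (simp add: shift_subs_def)

lemma shift_subs_append: "shift_subs (as @ bs) f = shift_subs as (shift_subs bs f)"
  by (simp add: shift_subs_def)

lemma shift_sub_commute: "shift_sub a (shift_sub b f) = shift_sub b (shift_sub a f)"
  by (auto simp: shift_sub_def fun_eq_iff algebra_simps)

lemma shift_sub_shift_subs_commute: "shift_sub a (shift_subs as f) = shift_subs as (shift_sub a f)"
  by (induct as) (simp_all add: shift_sub_commute)

lemma shift_subs_zero [simp]: "shift_subs as (\<lambda>_. 0) = (\<lambda>_. 0)"
  by (induct as) (simp_all add: shift_sub_def)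

lemma shift_subs_sum:
  "shift_subs as (\<lambda>n. \<Sum>i\<in>I. c i * f i n) = (\<lambda>n. \<Sum>i\<in>I. c i * shift_subs as (f i) n)"
  by (induct as)
    (simp_all add: shift_sub_def fun_eq_iff sum_subtractf sum_distrib_left algebra_simps)

lemma shift_subs_diff: "shift_subs as (\<lambda>n. f n - g n) = (\<lambda>n. shift_subs as f n - shift_subs as g n)"
proof (induct as)
  case (Cons a as)
  then show ?case
    by (simp only: shift_subs_Cons) (simp add: shift_sub_def fun_eq_iff algebra_simps)
qed simp

lemma shift_subs_Cons_power: "shift_subs (a # as) (\<lambda>n. a ^ n) = (\<lambda>_. 0)"
proof -
  have "shift_sub a (\<lambda>n. a ^ n) = (\<lambda>_. 0)"
    by (simp add: shift_sub_def fun_eq_iff)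
  then show ?thesis
    by (simp add: shift_sub_shift_subs_commute)
qed

section \<open>Orbits of a matrix and its characteristic polynomial\<close>

lemma mult_mat_vec_index_sum:
  assumes "A \<in> carrier_mat nr n" "v \<in> carrier_vec n" "i < nr"
  shows "(A *\<^sub>v v) $ i = (\<Sum>j<n. A $$ (i,j) * v $ j)"
  using assms by (auto simp: scalar_prod_def atLeast0LessThan intro!: sum.cong)

lemma mult_mat_index_sum:
  assumes "A \<in> carrier_mat nr n" "B \<in> carrier_mat n nc" "i < nr" "j < nc"
  shows "(A * B) $$ (i,j) = (\<Sum>k<n. A $$ (i,k) * B $$ (k,j))"
  using assms by (auto simp: scalar_prod_def atLeast0LessThan intro!: sum.cong)

lemma pow_mat_Suc_left:
  assumes A: "A \<in> carrier_mat n n"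
  shows "A ^\<^sub>m Suc k = A * A ^\<^sub>m k"
proof (induct k)
  case (Suc k)
  have "A ^\<^sub>m Suc (Suc k) = (A * A ^\<^sub>m k) * A"
    using Suc by simp
  also have "\<dots> = A * (A ^\<^sub>m k * A)"
    using A by (intro assoc_mult_mat[of _ n n _ n _ n]) auto
  finally show ?case
    by simp
qed (use A in simp)

lemma pow_mat_Suc_mult_vec:
  assumes "A \<in> carrier_mat n n" "v \<in> carrier_vec n"
  shows "A ^\<^sub>m Suc k *\<^sub>v v = A *\<^sub>v (A ^\<^sub>m k *\<^sub>v v)"
  unfolding pow_mat_Suc_left[OF assms(1)] using assms by (intro assoc_mult_mat_vec[of _ n n _ n]) auto

lemma upper_triangular_orbit_shift_sub:
  fixes U :: "'a::comm_ring_1 mat"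
  assumes U: "U \<in> carrier_mat m m" and ut: "upper_triangular U" and y: "y \<in> carrier_vec m"
    and i: "i < m"
  shows "shift_sub (U $$ (i,i)) (\<lambda>n. (U ^\<^sub>m n *\<^sub>v y) $ i)
    = (\<lambda>n. \<Sum>j\<in>{Suc i..<m}. U $$ (i,j) * (U ^\<^sub>m n *\<^sub>v y) $ j)"
proof
  fix n
  define Y where "Y = (\<lambda>j. (U ^\<^sub>m n *\<^sub>v y) $ j)"
  have "(U ^\<^sub>m Suc n *\<^sub>v y) $ i = (\<Sum>j<m. U $$ (i,j) * Y j)"
    unfolding Y_def pow_mat_Suc_mult_vec[OF U y] using i U y
    by (intro mult_mat_vec_index_sum) (auto intro: mult_mat_vec_carrier[OF pow_carrier_mat[OF U]])
  also have "\<dots> = (\<Sum>j\<in>{0..<i} \<union> ({i} \<union> {Suc i..<m}). U $$ (i,j) * Y j)"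
    using i by (intro sum.cong) auto
  also have "\<dots> = (\<Sum>j\<in>{0..<i}. U $$ (i,j) * Y j)
      + (U $$ (i,i) * Y i + (\<Sum>j\<in>{Suc i..<m}. U $$ (i,j) * Y j))"
    by (subst sum.union_disjoint; simp)+
  also have "(\<Sum>j\<in>{0..<i}. U $$ (i,j) * Y j) = 0"
    using ut U i by (intro sum.neutral) (auto simp: upper_triangular_def)
  finally show "shift_sub (U $$ (i,i)) (\<lambda>n. (U ^\<^sub>m n *\<^sub>v y) $ i) n
      = (\<Sum>j\<in>{Suc i..<m}. U $$ (i,j) * (U ^\<^sub>m n *\<^sub>v y) $ j)"
    by (simp add: shift_sub_def Y_def)
qed

lemma upper_triangular_orbit_annihilated:
  fixes U :: "'a::comm_ring_1 mat"
  assumes U: "U \<in> carrier_mat m m" and ut: "upper_triangular U" and y: "y \<in> carrier_vec m"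
  shows "i < m \<Longrightarrow>
    shift_subs (map (\<lambda>j. U $$ (j,j)) [i..<m]) (\<lambda>n. (U ^\<^sub>m n *\<^sub>v y) $ i) = (\<lambda>_. 0)"
proof (induct "m - i" arbitrary: i rule: less_induct)
  case (less i)
  define d where "d = (\<lambda>j. U $$ (j,j))"
  define Y where "Y = (\<lambda>j n. (U ^\<^sub>m n *\<^sub>v y) $ j)"
  have later_rows: "shift_subs (map d [Suc i..<m]) (Y j) = (\<lambda>_. 0)" if j: "j \<in> {Suc i..<m}" for j
  proof -
    have "[Suc i..<m] = [Suc i..<j] @ [j..<m]"
      using j upt_add_eq_append[of "Suc i" j "m - j"] by simp
    moreover have "shift_subs (map d [j..<m]) (Y j) = (\<lambda>_. 0)"
      using less.hyps[of j] j unfolding d_def Y_def by auto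
    ultimately show ?thesis
      by (simp add: shift_subs_append)
  qed
  have "[i..<m] = i # [Suc i..<m]"
    using less.prems by (simp add: upt_rec)
  then have "shift_subs (map d [i..<m]) (Y i) = shift_subs (map d [Suc i..<m]) (shift_sub (d i) (Y i))"
    by (simp add: shift_sub_shift_subs_commute)
  also have "\<dots> = (\<lambda>n. \<Sum>j\<in>{Suc i..<m}. U $$ (i,j) * shift_subs (map d [Suc i..<m]) (Y j) n)"
    unfolding d_def Y_def upper_triangular_orbit_shift_sub[OF U ut y less.prems] by (rule shift_subs_sum)
  also have "\<dots> = (\<lambda>_. 0)"
    using later_rows by (intro ext sum.neutral) auto
  finally show ?case
    unfolding d_def Y_def .
qed

lemma orbit_annihilated_by_char_poly:
  fixes A :: "complex mat"
  assumes A: "A \<in> carrier_mat m m" and cp: "char_poly A = (\<Prod>a\<leftarrow>es. [:- a, 1:])"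
    and x: "x \<in> carrier_vec m" and k: "k < m"
  shows "shift_subs es (\<lambda>n. (A ^\<^sub>m n *\<^sub>v x) $ k) = (\<lambda>_. 0)"
proof -
  obtain B P Q where sd: "schur_decomposition A es = (B, P, Q)"
    by (cases "schur_decomposition A es") auto
  from schur_decomposition[OF A cp sd] have sim: "similar_mat_wit A B P Q"
    and ut: "upper_triangular B" and dg: "diag_mat B = es"
    by auto
  from sim A have B: "B \<in> carrier_mat m m" and P: "P \<in> carrier_mat m m" and Q: "Q \<in> carrier_mat m m"
    unfolding similar_mat_wit_def Let_def by auto
  define y where "y = Q *\<^sub>v x"
  have y: "y \<in> carrier_vec m"
    using Q x by (simp add: y_def)
  have orbit: "(A ^\<^sub>m n *\<^sub>v x) $ k = (\<Sum>i<m. P $$ (k,i) * (B ^\<^sub>m n *\<^sub>v y) $ i)" for n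
  proof -
    have "A ^\<^sub>m n *\<^sub>v x = (P * B ^\<^sub>m n * Q) *\<^sub>v x"
      by (simp add: similar_mat_wit_pow_id[OF sim])
    also have "\<dots> = P *\<^sub>v (B ^\<^sub>m n *\<^sub>v y)"
      using P B Q x by (simp add: y_def assoc_mult_mat_vec[of _ m m _ m])
    finally show ?thesis
      using B y by (metis mult_mat_vec_index_sum[OF P _ k] mult_mat_vec_carrier pow_carrier_mat)
  qed
  have triangular: "shift_subs es (\<lambda>n. (B ^\<^sub>m n *\<^sub>v y) $ i) = (\<lambda>_. 0)" if i: "i < m" for i
  proof -
    have "[0..<m] = [0..<i] @ [i..<m]"
      using i upt_add_eq_append[of 0 i "m - i"] by simp
    then have "es = map (\<lambda>j. B $$ (j,j)) [0..<i] @ map (\<lambda>j. B $$ (j,j)) [i..<m]"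
      using B dg by (simp add: diag_mat_def)
    then show ?thesis
      using upper_triangular_orbit_annihilated[OF B ut y i] by (simp add: shift_subs_append)
  qed
  show ?thesis
    unfolding orbit shift_subs_sum using triangular by (intro ext sum.neutral) auto
qed

lemma eigenvalue_norm_le:
  fixes A :: "complex mat"
  assumes A: "A \<in> carrier_mat m m" and ev: "eigenvalue A e"
    and b: "\<And>i j. i < m \<Longrightarrow> j < m \<Longrightarrow> norm (A $$ (i,j)) \<le> b"
  shows "norm e \<le> real m * b"
proof -
  from ev obtain v where v: "v \<in> carrier_vec m" "v \<noteq> 0\<^sub>v m" "A *\<^sub>v v = e \<cdot>\<^sub>v v"
    unfolding eigenvalue_def eigenvector_def using A by auto
  obtain j0 where j0: "j0 < m" "v $ j0 \<noteq> 0"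
    using v(1,2) by (metis carrier_vecD eq_vecI index_zero_vec)
  have "finite ((\<lambda>j. norm (v $ j)) ` {..<m})" "(\<lambda>j. norm (v $ j)) ` {..<m} \<noteq> {}"
    using j0(1) by auto
  from Max_in[OF this] obtain i
    where i: "i < m" and i_max: "norm (v $ i) = Max ((\<lambda>j. norm (v $ j)) ` {..<m})"
    by auto
  have maxi: "norm (v $ j) \<le> norm (v $ i)" if "j < m" for j
    unfolding i_max using that by (intro Max_ge) auto
  have b0: "0 \<le> b"
    using b[OF i i] norm_ge_zero order_trans by blast
  have "norm e * norm (v $ i) = norm (\<Sum>j<m. A $$ (i,j) * v $ j)"
    using mult_mat_vec_index_sum[OF A v(1) i] v(1,3) i by (simp add: norm_mult[symmetric])
  also have "\<dots> \<le> (\<Sum>j<m. norm (A $$ (i,j)) * norm (v $ j))"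
    by (rule order_trans[OF norm_sum]) (simp add: norm_mult)
  also have "\<dots> \<le> (\<Sum>j<m. b * norm (v $ i))"
    by (intro sum_mono mult_mono b i maxi b0) auto
  finally have "norm e * norm (v $ i) \<le> real m * b * norm (v $ i)"
    by simp
  moreover have "norm (v $ i) > 0"
    using maxi[OF j0(1)] j0(2) by auto
  ultimately show ?thesis
    by simp
qed

lemma char_poly_factor_eigenvalue:
  fixes A :: "complex mat"
  assumes A: "A \<in> carrier_mat m m" and ev: "eigenvalue A g"
  obtains es where "char_poly A = (\<Prod>a\<leftarrow>g # es. [:- a, 1:])" "length es = m - 1"
    "\<forall>e\<in>set es. eigenvalue A e"
proof -
  obtain as where cp: "char_poly A = (\<Prod>a\<leftarrow>as. [:- a, 1:])" and len: "length as = m"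
    using char_poly_factorized[OF A] by blast
  have roots: "eigenvalue A e \<longleftrightarrow> e \<in> set as" for e
    using eigenvalue_root_char_poly[OF A] unfolding cp
    by (auto simp: poly_prod_list prod_list_zero_iff)
  then have g: "g \<in> set as"
    using ev by blast
  show ?thesis
  proof (rule that)
    show "char_poly A = (\<Prod>a\<leftarrow>g # remove1 g as. [:- a, 1:])"
      unfolding cp using prod_list_map_remove1[OF g, of "\<lambda>a. [:- a, 1:]"] by simp
    show "length (remove1 g as) = m - 1"
      using g len by (simp add: length_remove1)
    show "\<forall>e\<in>set (remove1 g as). eigenvalue A e"
      using set_remove1_subset[of g as] by (auto simp: roots)
  qed
qed

section \<open>Restriction to a set of columns\<close>

definition restrict_vec :: "(nat \<Rightarrow> nat) \<Rightarrow> nat \<Rightarrow> 'a vec \<Rightarrow> 'a vec" where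
  "restrict_vec idx m v = vec m (\<lambda>k. v $ idx k)"

definition restrict_mat :: "(nat \<Rightarrow> nat) \<Rightarrow> nat \<Rightarrow> 'a mat \<Rightarrow> 'a mat" where
  "restrict_mat idx m X = mat m m (\<lambda>(i,k). X $$ (idx i, idx k))"

lemma restrict_vec_carrier [simp]: "restrict_vec idx m v \<in> carrier_vec m"
  by (simp add: restrict_vec_def)

lemma restrict_mat_carrier [simp]: "restrict_mat idx m X \<in> carrier_mat m m"
  by (simp add: restrict_mat_def)

lemma restrict_dims [simp]:
  "dim_vec (restrict_vec idx m v) = m" "dim_row (restrict_mat idx m X) = m"
  "dim_col (restrict_mat idx m X) = m"
  by (simp_all add: restrict_vec_def restrict_mat_def)

context
  fixes X :: "'a::comm_ring_1 mat" and n m :: nat and idx :: "nat \<Rightarrow> nat" and J :: "nat set"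
  assumes X: "X \<in> carrier_mat n n"
    and idx: "bij_betw idx {..<m} J" and J: "J \<subseteq> {..<n}"
    and zero_cols: "\<forall>i<n. \<forall>j<n. j \<notin> J \<longrightarrow> X $$ (i,j) = 0"
begin

lemma restrict_index_less: "k < m \<Longrightarrow> idx k < n"
  using idx J by (auto simp: bij_betw_def)

lemma mult_mat_vec_index_restrict:
  assumes v: "v \<in> carrier_vec n" and i: "i < n"
  shows "(X *\<^sub>v v) $ i = (\<Sum>k<m. X $$ (i, idx k) * v $ idx k)"
proof -
  have "(X *\<^sub>v v) $ i = (\<Sum>j<n. X $$ (i,j) * v $ j)"
    by (rule mult_mat_vec_index_sum[OF X v i])
  also have "\<dots> = (\<Sum>j\<in>J. X $$ (i,j) * v $ j)"
    by (rule sum.mono_neutral_right) (use J zero_cols i in auto)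
  also have "\<dots> = (\<Sum>k<m. X $$ (i, idx k) * v $ idx k)"
    using sum.reindex_bij_betw[OF idx, of "\<lambda>j. X $$ (i,j) * v $ j"] by simp
  finally show ?thesis .
qed

lemma restrict_mult_mat_vec:
  assumes v: "v \<in> carrier_vec n"
  shows "restrict_vec idx m (X *\<^sub>v v) = restrict_mat idx m X *\<^sub>v restrict_vec idx m v"
proof (rule eq_vecI)
  fix k
  assume "k < dim_vec (restrict_mat idx m X *\<^sub>v restrict_vec idx m v)"
  then have k: "k < m"
    by simp
  have "restrict_vec idx m (X *\<^sub>v v) $ k = (\<Sum>j<m. X $$ (idx k, idx j) * v $ idx j)"
    using k mult_mat_vec_index_restrict[OF v restrict_index_less[OF k]] by (simp add: restrict_vec_def)
  also have "\<dots> = (restrict_mat idx m X *\<^sub>v restrict_vec idx m v) $ k"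
    using k by (subst mult_mat_vec_index_sum[of _ m m]) (auto simp: restrict_mat_def restrict_vec_def)
  finally show "restrict_vec idx m (X *\<^sub>v v) $ k = (restrict_mat idx m X *\<^sub>v restrict_vec idx m v) $ k" .
qed (simp add: restrict_vec_def restrict_mat_def)

lemma restrict_pow_mat_mult_vec:
  "v \<in> carrier_vec n \<Longrightarrow>
    restrict_vec idx m (X ^\<^sub>m p *\<^sub>v v) = restrict_mat idx m X ^\<^sub>m p *\<^sub>v restrict_vec idx m v"
proof (induct p arbitrary: v)
  case 0
  then show ?case
    using X by simp
next
  case (Suc p)
  have "restrict_vec idx m (X ^\<^sub>m Suc p *\<^sub>v v) = restrict_vec idx m (X ^\<^sub>m p *\<^sub>v (X *\<^sub>v v))"
    using X Suc.prems by (simp add: assoc_mult_mat_vec[of _ n n _ n])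
  also have "\<dots> = restrict_mat idx m X ^\<^sub>m p *\<^sub>v (restrict_mat idx m X *\<^sub>v restrict_vec idx m v)"
    using X Suc by (simp add: restrict_mult_mat_vec)
  also have "\<dots> = restrict_mat idx m X ^\<^sub>m Suc p *\<^sub>v restrict_vec idx m v"
    by (simp add: assoc_mult_mat_vec[of _ m m _ m])
  finally show ?case .
qed

end

lemma eigenvalue_restrict_mat:
  fixes X :: "'a::field mat"
  assumes X: "X \<in> carrier_mat n n"
    and idx: "bij_betw idx {..<m} J" and J: "J \<subseteq> {..<n}"
    and zero_cols: "\<forall>i<n. \<forall>j<n. j \<notin> J \<longrightarrow> X $$ (i,j) = 0"
    and ev: "eigenvalue X g" and g: "g \<noteq> 0"
  shows "eigenvalue (restrict_mat idx m X) g"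
proof -
  obtain v where v: "v \<in> carrier_vec n" "v \<noteq> 0\<^sub>v n" "X *\<^sub>v v = g \<cdot>\<^sub>v v"
    using ev X unfolding eigenvalue_def eigenvector_def by auto
  note restrict = mult_mat_vec_index_restrict[OF X idx J zero_cols v(1)]
  have nonzero: "restrict_vec idx m v \<noteq> 0\<^sub>v m"
  proof
    assume "restrict_vec idx m v = 0\<^sub>v m"
    then have "v $ idx k = 0" if "k < m" for k
      using that by (metis index_vec index_zero_vec(1) restrict_vec_def)
    then have "g * v $ i = 0" if "i < n" for i
      using restrict[OF that] v(1,3) that by simp
    then have "v = 0\<^sub>v n"
      using g v(1) by (intro eq_vecI) auto
    with v(2) show False
      by simp
  qed
  have "restrict_vec idx m (g \<cdot>\<^sub>v v) = g \<cdot>\<^sub>v restrict_vec idx m v"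
    using v(1) restrict_index_less[OF X idx J zero_cols] by (intro eq_vecI) (auto simp: restrict_vec_def)
  then have "restrict_mat idx m X *\<^sub>v restrict_vec idx m v = g \<cdot>\<^sub>v restrict_vec idx m v"
    using restrict_mult_mat_vec[OF X idx J zero_cols v(1)] v(3) by simp
  with nonzero show ?thesis
    unfolding eigenvalue_def eigenvector_def by (intro exI[of _ "restrict_vec idx m v"]) simp
qed

section \<open>Landau estimates for linear recurrences\<close>

lemma bigo_tendsto_zero:
  assumes "f \<in> O[F](g)" and "(g \<longlongrightarrow> 0) F"
  shows "(f \<longlongrightarrow> 0) F"
proof -
  obtain c where "eventually (\<lambda>x. norm (f x) \<le> c * norm (g x)) F"
    using assms(1) by (elim landau_o.bigE)
  then show ?thesis
    by (intro tendsto_0_le[OF assms(2), of _ c]) (auto elim: eventually_mono simp: mult.commute)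
qed

lemma tendsto_norm_power_zero:
  assumes "0 < k"
  shows "((\<lambda>x::'a::real_normed_vector. complex_of_real (norm x ^ k)) \<longlongrightarrow> 0) (at 0)"
proof -
  have "((\<lambda>x::'a. norm x) \<longlongrightarrow> norm (0::'a)) (at 0)"
    by (rule tendsto_norm[OF tendsto_ident_at])
  then have "((\<lambda>x::'a. complex_of_real (norm x ^ k)) \<longlongrightarrow> complex_of_real (norm (0::'a) ^ k)) (at 0)"
    by (intro tendsto_of_real tendsto_power)
  then show ?thesis
    using assms by (simp add: power_0_left)
qed

lemma tendsto_imp_bigo_1:
  fixes f :: "'a \<Rightarrow> 'b::real_normed_field"
  shows "(f \<longlongrightarrow> c) F \<Longrightarrow> f \<in> O[F](\<lambda>_. 1)"
  by (rule bigoI_tendsto[where c = c]) simp_all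

lemma bounded_mult_bigo:
  "l \<in> O[F](\<lambda>_. 1) \<Longrightarrow> f \<in> O[F](g) \<Longrightarrow> (\<lambda>x. l x * f x) \<in> O[F](g)"
  using landau_o.big.mult[of l F "\<lambda>_. 1" f g] by simp

lemma exp_minus_one_bigo:
  fixes a :: "'a \<Rightarrow> complex"
  assumes "a \<in> O[F](g)" and "(a \<longlongrightarrow> 0) F"
  shows "(\<lambda>x. exp (a x) - 1) \<in> O[F](g)"
proof -
  have "eventually (\<lambda>x. norm (a x) \<le> 1/2) F"
    using tendstoD[OF assms(2), of "1/2"] by (auto elim: eventually_mono)
  then have "eventually (\<lambda>x. norm (exp (a x) - 1) \<le> 3/2 * norm (a x)) F"
    by (elim eventually_mono) (rule norm_exp_bounds(2))
  then have "(\<lambda>x. exp (a x) - 1) \<in> O[F](a)"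
    by (intro bigoI)
  then show ?thesis
    using assms(1) by (rule landau_o.big_trans)
qed

lemma power_diff_eq_exp_Ln_diff:
  fixes G u :: complex
  assumes "G \<noteq> 0" and "u \<noteq> 0"
  shows "G - u ^ n = exp (of_nat n * Ln u) * (exp (Ln G - of_nat n * Ln u) - 1)"
proof -
  let ?b = "of_nat n * Ln u"
  have "exp ?b * (exp (Ln G - ?b) - 1) = exp (Ln G) - exp ?b"
    by (simp add: exp_diff field_simps)
  then show ?thesis
    using assms by (simp add: exp_of_nat_mult)
qed

lemma power_diff_bigo_of_Ln_diff_bigo:
  fixes G u h :: "'a \<Rightarrow> complex"
  assumes G: "(G \<longlongrightarrow> 1) F" and u: "(u \<longlongrightarrow> 1) F" and h: "(h \<longlongrightarrow> 0) F"
    and Ln_diff: "(\<lambda>x. Ln (G x) - of_nat n * Ln (u x)) \<in> O[F](h)"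
  shows "(\<lambda>x. G x - u x ^ n) \<in> O[F](h)"
proof -
  have "((\<lambda>x. of_nat n * Ln (u x)) \<longlongrightarrow> of_nat n * Ln 1) F"
    by (intro tendsto_intros u) simp
  then have "((\<lambda>x. exp (of_nat n * Ln (u x))) \<longlongrightarrow> exp 0) F"
    by (intro tendsto_intros) simp
  then have bigo: "(\<lambda>x. exp (of_nat n * Ln (u x)) * (exp (Ln (G x) - of_nat n * Ln (u x)) - 1))
      \<in> O[F](h)"
    using Ln_diff bigo_tendsto_zero[OF Ln_diff h]
    by (intro bounded_mult_bigo tendsto_imp_bigo_1 exp_minus_one_bigo)
  have "eventually (\<lambda>x. G x \<noteq> 0 \<and> u x \<noteq> 0) F"
    using tendsto_imp_eventually_ne[OF G] tendsto_imp_eventually_ne[OF u]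
    by (auto simp: eventually_conj_iff)
  then have "eventually (\<lambda>x. exp (of_nat n * Ln (u x)) * (exp (Ln (G x) - of_nat n * Ln (u x)) - 1)
      = G x - u x ^ n) F"
    by (elim eventually_mono) (simp add: power_diff_eq_exp_Ln_diff)
  from this bigo show ?thesis
    by (rule landau_o.big.in_cong[THEN iffD1])
qed

lemma shift_subs_bigo:
  fixes f :: "'a \<Rightarrow> nat \<Rightarrow> 'b::real_normed_field"
  assumes "\<forall>l\<in>set ls. l \<in> O[F](\<lambda>_. 1)" and "\<forall>n \<le> N + length ls. (\<lambda>x. f x n) \<in> O[F](g)"
    and "n \<le> N"
  shows "(\<lambda>x. shift_subs (map (\<lambda>l. l x) ls) (f x) n) \<in> O[F](g)"
  using assms
proof (induct ls arbitrary: N n)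
  case (Cons l ls)
  have "(\<lambda>x. shift_subs (map (\<lambda>l. l x) ls) (f x) k) \<in> O[F](g)" if "k \<le> Suc N" for k
    using Cons.hyps[of "Suc N" k] Cons.prems that by auto
  then show ?case
    using Cons.prems
    by (auto simp: shift_sub_def intro!: sum_in_bigo bounded_mult_bigo)
qed simp

lemma bigo_of_shift_subs_bigo:
  fixes f :: "'a \<Rightarrow> nat \<Rightarrow> 'b::real_normed_field"
  assumes "\<forall>l\<in>set ls. l \<in> O[F](\<lambda>_. 1)"
    and "\<forall>n. (\<lambda>x. shift_subs (map (\<lambda>l. l x) ls) (f x) n) \<in> O[F](g)"
    and "\<forall>n < length ls. (\<lambda>x. f x n) \<in> O[F](g)"
  shows "(\<lambda>x. f x n) \<in> O[F](g)"
  using assms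
proof (induct ls arbitrary: n)
  case (Cons l ls)
  let ?D = "\<lambda>x. shift_subs (map (\<lambda>l. l x) ls) (f x)"
  have "(\<lambda>x. ?D x k) \<in> O[F](g)" for k
  proof (induct k)
    case 0
    show ?case
      using Cons.prems by (intro shift_subs_bigo[where N = 0]) auto
  next
    case (Suc k)
    have "(\<lambda>x. shift_sub (l x) (?D x) k + l x * ?D x k) \<in> O[F](g)"
      using Cons.prems(1,2) Suc by (auto intro!: sum_in_bigo bounded_mult_bigo)
    then show ?case
      by (simp add: shift_sub_def)
  qed
  then show ?case
    using Cons by auto
qed simp

lemma recurrence_bigo:
  fixes f :: "'a \<Rightarrow> nat \<Rightarrow> 'b::real_normed_field"
  assumes u: "u \<in> O[F](\<lambda>_. 1)" and ls: "\<forall>l\<in>set ls. l \<in> O[F](\<lambda>_. 1)"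
    and rec: "eventually (\<lambda>x. shift_subs (u x # map (\<lambda>l. l x) ls) (f x) = (\<lambda>_. 0)) F"
    and init: "\<forall>n \<le> length ls. (\<lambda>x. f x n) \<in> O[F](g)"
  shows "(\<lambda>x. f x n) \<in> O[F](g)"
proof -
  define e where "e = (\<lambda>x. shift_subs (map (\<lambda>l. l x) ls) (f x))"
  have "(\<lambda>x. e x p) \<in> O[F](g)" for p
  proof (induct p)
    case 0
    show ?case
      unfolding e_def using ls init by (intro shift_subs_bigo[where N = 0]) auto
  next
    case (Suc p)
    have "eventually (\<lambda>x. u x * e x p = e x (Suc p)) F"
      using rec by (auto elim!: eventually_mono simp: e_def shift_sub_def fun_eq_iff)
    moreover have "(\<lambda>x. u x * e x p) \<in> O[F](g)"
      by (rule bounded_mult_bigo[OF u Suc])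
    ultimately show ?case
      by (rule landau_o.big.in_cong[THEN iffD1])
  qed
  then show ?thesis
    using ls init by (intro bigo_of_shift_subs_bigo[of ls]) (auto simp: e_def)
qed

section \<open>Matrix families depending on a parameter\<close>

lemma continuous_mult_mat_index:
  assumes A: "\<And>x. A x \<in> carrier_mat nr n" and B: "\<And>x. B x \<in> carrier_mat n nc"
    and cA: "\<And>i j. i < nr \<Longrightarrow> j < n \<Longrightarrow> continuous F (\<lambda>x. A x $$ (i,j))"
    and cB: "\<And>i j. i < n \<Longrightarrow> j < nc \<Longrightarrow> continuous F (\<lambda>x. B x $$ (i,j))"
    and i: "i < nr" and j: "j < nc"
  shows "continuous F (\<lambda>x. (A x * B x) $$ (i,j) :: 'a::real_normed_field)"
  using mult_mat_index_sum[OF A B i j] cA cB i j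
  by (simp, intro continuous_sum continuous_mult') auto

lemma eventually_entries_bounded:
  fixes A :: "'a \<Rightarrow> 'b::real_normed_field mat"
  assumes "\<And>i j. i < nr \<Longrightarrow> j < nc \<Longrightarrow> (\<lambda>x. A x $$ (i,j)) \<in> O[F](\<lambda>_. 1)"
  obtains b where "eventually (\<lambda>x. \<forall>i<nr. \<forall>j<nc. norm (A x $$ (i,j)) \<le> b) F"
proof -
  let ?S = "{..<nr} \<times> {..<nc}"
  have "\<forall>p\<in>?S. \<exists>c. eventually (\<lambda>x. norm (A x $$ p) \<le> c) F"
  proof
    fix p
    assume "p \<in> ?S"
    then obtain i j where p: "p = (i,j)" "i < nr" "j < nc"
      by auto
    obtain c where "eventually (\<lambda>x. norm (A x $$ (i,j)) \<le> c * norm (1::'b)) F"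
      using assms[OF p(2,3)] by (elim landau_o.bigE)
    then show "\<exists>c. eventually (\<lambda>x. norm (A x $$ p) \<le> c) F"
      using p(1) by auto
  qed
  then obtain C where "\<forall>p\<in>?S. eventually (\<lambda>x. norm (A x $$ p) \<le> C p) F"
    by metis
  then have "eventually (\<lambda>x. \<forall>p\<in>?S. norm (A x $$ p) \<le> C p) F"
    by (simp add: eventually_ball_finite)
  moreover have C_le: "C p \<le> (\<Sum>p\<in>?S. \<bar>C p\<bar>)" if "p \<in> ?S" for p
    using that member_le_sum[of p ?S "\<lambda>p. \<bar>C p\<bar>"] by fastforce
  ultimately have "eventually (\<lambda>x. \<forall>i<nr. \<forall>j<nc. norm (A x $$ (i,j)) \<le> (\<Sum>p\<in>?S. \<bar>C p\<bar>)) F"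
  proof (elim eventually_mono, intro allI impI)
    fix x i j
    assume bound: "\<forall>p\<in>?S. norm (A x $$ p) \<le> C p" and ij: "i < nr" "j < nc"
    then have "norm (A x $$ (i,j)) \<le> C (i,j)"
      by auto
    also have "\<dots> \<le> (\<Sum>p\<in>?S. \<bar>C p\<bar>)"
      using ij by (intro C_le) auto
    finally show "norm (A x $$ (i,j)) \<le> (\<Sum>p\<in>?S. \<bar>C p\<bar>)" .
  qed
  then show ?thesis
    by (rule that)
qed

lemma eigenvalue_orbit_annihilator:
  fixes A :: "complex mat"
  assumes A: "A \<in> carrier_mat (Suc m) (Suc m)" and v: "v \<in> carrier_vec (Suc m)" and k: "k < Suc m"
    and ev: "eigenvalue A g"
  shows "\<exists>es. length es = m \<and> (\<forall>e\<in>set es. eigenvalue A e)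
    \<and> shift_subs (g # es) (\<lambda>n. (A ^\<^sub>m n *\<^sub>v v) $ k) = (\<lambda>_. 0)"
proof -
  obtain es where "char_poly A = (\<Prod>a\<leftarrow>g # es. [:- a, 1:])" "length es = m"
    "\<forall>e\<in>set es. eigenvalue A e"
    using char_poly_factor_eigenvalue[OF A ev] by auto
  then show ?thesis
    using orbit_annihilated_by_char_poly[OF A _ v k] by blast
qed

lemma matrix_orbit_recurrence:
  fixes A :: "'a \<Rightarrow> complex mat" and u :: "'a \<Rightarrow> complex"
  assumes A: "\<And>x. A x \<in> carrier_mat (Suc m) (Suc m)" and v: "\<And>x. v x \<in> carrier_vec (Suc m)"
    and k: "k < Suc m"
    and bounded: "\<And>i j. i < Suc m \<Longrightarrow> j < Suc m \<Longrightarrow> (\<lambda>x. A x $$ (i,j)) \<in> O[F](\<lambda>_. 1)"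
    and ev: "eventually (\<lambda>x. eigenvalue (A x) (u x)) F"
  obtains ls where "length ls = m" "\<forall>l\<in>set ls. l \<in> O[F](\<lambda>_. 1)"
    "eventually (\<lambda>x. shift_subs (u x # map (\<lambda>l. l x) ls) (\<lambda>n. (A x ^\<^sub>m n *\<^sub>v v x) $ k) = (\<lambda>_. 0)) F"
proof -
  obtain b where "eventually (\<lambda>x. \<forall>i<Suc m. \<forall>j<Suc m. norm (A x $$ (i,j)) \<le> b) F"
    using eventually_entries_bounded[OF bounded] by blast
  then have root_bound: "eventually (\<lambda>x. \<forall>e. eigenvalue (A x) e \<longrightarrow> norm e \<le> real (Suc m) * b) F"
  proof (elim eventually_mono, intro allI impI)
    fix x e
    assume "\<forall>i<Suc m. \<forall>j<Suc m. norm (A x $$ (i,j)) \<le> b" and "eigenvalue (A x) e"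
    then show "norm e \<le> real (Suc m) * b"
      by (intro eigenvalue_norm_le[OF A]) auto
  qed
  have "\<exists>es. eigenvalue (A x) (u x) \<longrightarrow> length es = m \<and> (\<forall>e\<in>set es. eigenvalue (A x) e)
      \<and> shift_subs (u x # es) (\<lambda>n. (A x ^\<^sub>m n *\<^sub>v v x) $ k) = (\<lambda>_. 0)" for x
    using eigenvalue_orbit_annihilator[OF A v k] by blast
  then obtain lam where lam: "\<And>x. eigenvalue (A x) (u x) \<Longrightarrow> length (lam x) = m
      \<and> (\<forall>e\<in>set (lam x). eigenvalue (A x) e)
      \<and> shift_subs (u x # lam x) (\<lambda>n. (A x ^\<^sub>m n *\<^sub>v v x) $ k) = (\<lambda>_. 0)"
    by metis
  define ls where "ls = map (\<lambda>i x. lam x ! i) [0..<m]"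
  have map_ls: "map (\<lambda>l. l x) ls = lam x" if "eigenvalue (A x) (u x)" for x
    using lam[OF that] map_nth[of "lam x"] by (simp add: ls_def comp_def)
  have "l \<in> O[F](\<lambda>_. 1)" if "l \<in> set ls" for l
  proof -
    obtain i where i: "i < m" and l: "l = (\<lambda>x. lam x ! i)"
      using \<open>l \<in> set ls\<close> by (auto simp: ls_def)
    have "eventually (\<lambda>x. norm (l x) \<le> real (Suc m) * b * norm (1::complex)) F"
      using ev root_bound by eventually_elim (use lam i l in auto)
    then show ?thesis
      by (intro bigoI)
  qed
  moreover have "eventually (\<lambda>x. shift_subs (u x # map (\<lambda>l. l x) ls) (\<lambda>n. (A x ^\<^sub>m n *\<^sub>v v x) $ k)
      = (\<lambda>_. 0)) F"
  proof (rule eventually_mono[OF ev])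
    fix x
    assume ev_x: "eigenvalue (A x) (u x)"
    show "shift_subs (u x # map (\<lambda>l. l x) ls) (\<lambda>n. (A x ^\<^sub>m n *\<^sub>v v x) $ k) = (\<lambda>_. 0)"
      unfolding map_ls[OF ev_x] using lam[OF ev_x] by blast
  qed
  ultimately show ?thesis
    using that[of ls] by (simp add: ls_def)
qed

section \<open>Fourier symbols of the lattice Boltzmann scheme\<close>

lemma cmat_dims [simp]: "dim_row (cmat A) = dim_row A" "dim_col (cmat A) = dim_col A"
  by (simp_all add: cmat_def)

lemma cmat_carrier [simp]: "A \<in> carrier_mat nr nc \<Longrightarrow> cmat A \<in> carrier_mat nr nc"
  by (simp add: cmat_def)

lemma minv:
  assumes "M \<in> carrier_mat q q" and "invertible_mat M"
  shows minv_carrier: "minv M \<in> carrier_mat q q" and mult_minv: "M * minv M = 1\<^sub>m q"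
proof -
  have "inverts_mat M (minv M) \<and> inverts_mat (minv M) M"
    unfolding minv_def by (rule someI_ex) (use assms(2) invertible_mat_def in blast)
  then have 1: "M * minv M = 1\<^sub>m q" and 2: "minv M * M = 1\<^sub>m (dim_row (minv M))"
    using assms(1) unfolding inverts_mat_def by auto
  show "M * minv M = 1\<^sub>m q"
    by (rule 1)
  show "minv M \<in> carrier_mat q q"
    using arg_cong[OF 1, of dim_col] arg_cong[OF 2, of dim_col] assms(1) by auto
qed

lemma Kmat_carrier [simp]: "Kmat q s \<epsilon> \<in> carrier_mat q q"
  by (simp add: Kmat_def)

lemma Kmat_dims [simp]: "dim_row (Kmat q s \<epsilon>) = q" "dim_col (Kmat q s \<epsilon>) = q"
  by (simp_all add: Kmat_def)

lemma Kmat_index: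
  "i < q \<Longrightarrow> j < q \<Longrightarrow> Kmat q s \<epsilon> $$ (i,j) = (if i = j then 1 else 0)
     - s i * ((if i = j then 1 else 0) - \<epsilon> i * (if j = 0 then 1 else 0))"
  by (simp add: Kmat_def)

lemma Ehat_dims [simp]:
  "dim_row (Ehat q c M s \<epsilon> \<theta>) = dim_row M" "dim_col (Ehat q c M s \<epsilon> \<theta>) = q"
  by (simp_all add: Ehat_def cmat_def)

lemma what_carrier [simp]: "what q w \<theta> \<in> carrier_vec q"
  by (simp add: what_def)

lemma Ehat_carrier:
  assumes "M \<in> carrier_mat q q" and "invertible_mat M"
  shows "Ehat q c M s \<epsilon> \<theta> \<in> carrier_mat q q"
  using minv_carrier[OF assms] assms(1) unfolding Ehat_def
  by (intro mult_carrier_mat[of _ q q] cmat_carrier mat_diag_dim) auto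

(* Index 0 is the conserved moment (index 1 in the paper); the columns of K outside this set
   vanish. *)
definition active_moments :: "nat \<Rightarrow> (nat \<Rightarrow> real) \<Rightarrow> nat set" where
  "active_moments q s = {i. i < q \<and> (i = 0 \<or> s i \<noteq> 1)}"

lemma active_moments_subset: "active_moments q s \<subseteq> {..<q}"
  by (auto simp: active_moments_def)

lemma active_moments_enumeration:
  assumes "0 < q"
  obtains idx where "bij_betw idx {..<Suc (Qnum q s)} (active_moments q s)" and "idx 0 = 0"
proof -
  define L where "L = sorted_list_of_set (active_moments q s)"
  have insert_0: "active_moments q s = insert 0 {i. 1 \<le> i \<and> i < q \<and> s i \<noteq> 1}"
    using assms by (auto simp: active_moments_def)
  have "card (active_moments q s) = Suc (Qnum q s)"
    unfolding insert_0 Qnum_def by (subst card_insert_disjoint) auto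
  then have L: "distinct L" "sorted L" "set L = active_moments q s" "length L = Suc (Qnum q s)"
    using finite_subset[OF active_moments_subset] by (simp_all add: L_def)
  have "0 \<in> set L"
    using L(3) assms by (simp add: active_moments_def)
  then obtain k where k: "k < length L" "L ! k = 0"
    by (metis in_set_conv_nth)
  then have "L ! 0 = 0"
    using sorted_nth_mono[OF L(2), of 0 k] by simp
  moreover have "bij_betw ((!) L) {..<Suc (Qnum q s)} (active_moments q s)"
    using L(1,3,4) by (intro bij_betw_nth) auto
  ultimately show ?thesis
    using that by blast
qed

lemma Ehat_zero_cols:
  assumes M: "M \<in> carrier_mat q q" and inv: "invertible_mat M"
  shows "\<forall>i<q. \<forall>j<q. j \<notin> active_moments q s \<longrightarrow> Ehat q c M s \<epsilon> \<theta> $$ (i,j) = 0"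
proof (intro allI impI)
  fix i j
  assume i: "i < q" and j: "j < q" and inactive: "j \<notin> active_moments q s"
  define X where "X = cmat M * mat_diag q (\<lambda>i. shift_symbol (c i) \<theta>) * cmat (minv M)"
  have X: "X \<in> carrier_mat q q"
    using minv_carrier[OF M inv] M unfolding X_def
    by (intro mult_carrier_mat[of _ q q] cmat_carrier mat_diag_dim) auto
  have "Ehat q c M s \<epsilon> \<theta> $$ (i,j) = (\<Sum>k<q. X $$ (i,k) * cmat (Kmat q s \<epsilon>) $$ (k,j))"
    unfolding Ehat_def X_def[symmetric] by (rule mult_mat_index_sum[OF X _ i j]) simp
  also have "\<dots> = 0"
    using j inactive by (intro sum.neutral) (simp add: cmat_def Kmat_index active_moments_def)
  finally show "Ehat q c M s \<epsilon> \<theta> $$ (i,j) = 0" .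
qed

lemma Ehat_0:
  assumes M: "M \<in> carrier_mat q q" and inv: "invertible_mat M"
  shows "Ehat q c M s \<epsilon> 0 = cmat (Kmat q s \<epsilon>)"
proof -
  have "mat_diag q (\<lambda>i. shift_symbol (c i) 0) = 1\<^sub>m q"
    by (rule eq_matI) (simp_all add: shift_symbol_def mat_diag_def)
  moreover have "cmat M * cmat (minv M) = cmat (M * minv M)"
    unfolding cmat_def by (rule of_real_hom.mat_hom_mult[OF M minv_carrier[OF M inv], symmetric])
  moreover have "cmat (M * minv M) = 1\<^sub>m q"
    by (simp add: mult_minv[OF M inv] cmat_def of_real_hom.mat_hom_one)
  moreover have "cmat M * 1\<^sub>m q = cmat M"
    using carrier_matD[OF M] by simp
  ultimately show ?thesis
    by (simp add: Ehat_def)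
qed

(* Row 1 of K is e_1^T because \<epsilon>_1 = 1, so K preserves the conserved moment. *)
lemma Kmat_pow_mult_vec_0:
  assumes eps: "\<epsilon> 0 = 1" and q: "0 < q"
  shows "v \<in> carrier_vec q \<Longrightarrow> (cmat (Kmat q s \<epsilon>) ^\<^sub>m n *\<^sub>v v) $ 0 = v $ 0"
proof (induct n arbitrary: v)
  case (Suc n)
  let ?K = "cmat (Kmat q s \<epsilon>)"
  have K: "?K \<in> carrier_mat q q"
    by simp
  have "?K ^\<^sub>m Suc n *\<^sub>v v = ?K *\<^sub>v (?K ^\<^sub>m n *\<^sub>v v)"
    by (rule pow_mat_Suc_mult_vec[OF K Suc.prems])
  also have "\<dots> $ 0 = (\<Sum>j<q. ?K $$ (0,j) * (?K ^\<^sub>m n *\<^sub>v v) $ j)"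
    by (rule mult_mat_vec_index_sum[OF K mult_mat_vec_carrier[OF pow_carrier_mat[OF K] Suc.prems] q])
  also have "\<dots> = (\<Sum>j<q. if j = 0 then (?K ^\<^sub>m n *\<^sub>v v) $ j else 0)"
    using eps by (intro sum.cong) (auto simp: cmat_def Kmat_index)
  also have "\<dots> = (?K ^\<^sub>m n *\<^sub>v v) $ 0"
    using q by simp
  finally show ?case
    using Suc by simp
qed simp

lemma gstart_at_0:
  assumes "M \<in> carrier_mat q q" and "invertible_mat M" and "0 < q" and "\<epsilon> 0 = 1"
  shows "gstart q c M s \<epsilon> w n 0 = laurent_symbol (w 0) 0"
  unfolding gstart_def Ehat_0[OF assms(1,2)]
  using assms(3,4) by (subst Kmat_pow_mult_vec_0) (auto simp: what_def)

lemma gstart_0: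
  assumes "M \<in> carrier_mat q q" and "invertible_mat M" and "0 < q"
  shows "gstart q c M s \<epsilon> w 0 \<theta> = laurent_symbol (w 0) \<theta>"
  using carrier_matD(1)[OF assms(1)] assms(3) by (simp add: gstart_def what_def)

lemma continuous_shift_symbol: "continuous (at \<theta>) (shift_symbol c)"
  unfolding shift_symbol_def cis_conv_exp by (intro continuous_intros)

lemma continuous_laurent_symbol: "continuous (at \<theta>) (laurent_symbol p)"
  unfolding laurent_symbol_def by (intro continuous_intros continuous_shift_symbol)

lemma continuous_Ehat_index:
  assumes M: "M \<in> carrier_mat q q" and inv: "invertible_mat M" and i: "i < q" and j: "j < q"
  shows "continuous (at \<theta>) (\<lambda>\<theta>. Ehat q c M s \<epsilon> \<theta> $$ (i,j))"
proof -
  have diag: "continuous (at \<theta>) (\<lambda>\<theta>. mat_diag q (\<lambda>i. shift_symbol (c i) \<theta>) $$ (i,j))"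
    if "i < q" "j < q" for i j
    using that continuous_shift_symbol by (cases "i = j") (simp_all add: mat_diag_def)
  note continuous_product = continuous_mult_mat_index[where nr = q and n = q and nc = q]
  show ?thesis
    unfolding Ehat_def using M minv_carrier[OF M inv] i j
    by (intro continuous_product)
      (auto intro!: continuous_product diag mult_carrier_mat[of _ q q _ q] simp del: index_mult_mat)
qed

lemma Ehat_index_bigo_1:
  assumes "M \<in> carrier_mat q q" and "invertible_mat M" and "i < q" and "j < q"
  shows "(\<lambda>\<theta>. Ehat q c M s \<epsilon> \<theta> $$ (i,j)) \<in> O[at \<theta>0](\<lambda>_. 1)"
  using continuous_Ehat_index[OF assms] by (intro tendsto_imp_bigo_1) (simp add: isCont_def)

lemma continuous_Ehat_pow_index:
  assumes M: "M \<in> carrier_mat q q" and inv: "invertible_mat M"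
  shows "i < q \<Longrightarrow> j < q \<Longrightarrow> continuous (at \<theta>) (\<lambda>\<theta>. (Ehat q c M s \<epsilon> \<theta> ^\<^sub>m n) $$ (i,j))"
proof (induct n arbitrary: i j)
  case 0
  then show ?case
    using carrier_matD(1)[OF M] by simp
next
  case (Suc n)
  show ?case
    unfolding pow_mat.simps
    by (rule continuous_mult_mat_index[where nr = q and n = q and nc = q])
      (use Suc Ehat_carrier[OF M inv] pow_carrier_mat[OF Ehat_carrier[OF M inv]]
        continuous_Ehat_index[OF M inv] in auto)
qed

lemma continuous_gstart:
  assumes "M \<in> carrier_mat q q" and "invertible_mat M" and "0 < q"
  shows "continuous (at \<theta>) (gstart q c M s \<epsilon> w n)"
proof -
  have "gstart q c M s \<epsilon> w n \<theta>' = (\<Sum>k<q. (Ehat q c M s \<epsilon> \<theta>' ^\<^sub>m n) $$ (0,k) * laurent_symbol (w k) \<theta>')"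
    for \<theta>'
    using mult_mat_vec_index_sum[OF pow_carrier_mat[OF Ehat_carrier[OF assms(1,2)]] what_carrier assms(3)]
    by (simp add: gstart_def what_def)
  then have "gstart q c M s \<epsilon> w n
      = (\<lambda>\<theta>. \<Sum>k<q. (Ehat q c M s \<epsilon> \<theta> ^\<^sub>m n) $$ (0,k) * laurent_symbol (w k) \<theta>)"
    by (rule ext)
  then show ?thesis
    using assms by (auto intro!: continuous_sum continuous_mult' continuous_Ehat_pow_index
        continuous_laurent_symbol)
qed

lemma Phihat_root_eigenvalue:
  assumes M: "M \<in> carrier_mat q q" and inv: "invertible_mat M"
    and root: "Phihat q c M s \<epsilon> z \<theta> = 0" and z: "z \<noteq> 0"
  shows "eigenvalue (Ehat q c M s \<epsilon> \<theta>) z"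
proof -
  let ?E = "Ehat q c M s \<epsilon> \<theta>"
  have E: "?E \<in> carrier_mat q q"
    by (rule Ehat_carrier[OF M inv])
  have "z \<cdot>\<^sub>m 1\<^sub>m q - ?E = - char_matrix ?E z"
    using E by (intro eq_matI) (auto simp: char_matrix_def)
  then have "det (- char_matrix ?E z) = 0"
    using root z by (simp add: Phihat_def)
  then have "det (char_matrix ?E z) = 0"
    using det_0_negate[of "char_matrix ?E z" q] E by simp
  then show ?thesis
    using eigenvalue_det[OF E] by simp
qed

lemma gstart_restricted_orbit:
  assumes M: "M \<in> carrier_mat q q" and inv: "invertible_mat M"
    and idx: "bij_betw idx {..<m} (active_moments q s)" and idx0: "idx 0 = 0" and m: "0 < m"
  shows "gstart q c M s \<epsilon> w n \<theta>
    = (restrict_mat idx m (Ehat q c M s \<epsilon> \<theta>) ^\<^sub>m n *\<^sub>v restrict_vec idx m (what q w \<theta>)) $ 0"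
proof -
  have "restrict_mat idx m (Ehat q c M s \<epsilon> \<theta>) ^\<^sub>m n *\<^sub>v restrict_vec idx m (what q w \<theta>)
      = restrict_vec idx m (Ehat q c M s \<epsilon> \<theta> ^\<^sub>m n *\<^sub>v what q w \<theta>)"
    by (rule restrict_pow_mat_mult_vec[OF Ehat_carrier[OF M inv] idx active_moments_subset
          Ehat_zero_cols[OF M inv] what_carrier, symmetric])
  then show ?thesis
    using m by (simp add: gstart_def restrict_vec_def idx0)
qed

lemma gstart_error_recurrence:
  assumes q: "0 < q" and M: "M \<in> carrier_mat q q" and inv: "invertible_mat M"
    and root: "eventually (\<lambda>\<theta>. Phihat q c M s \<epsilon> (g1 \<theta>) \<theta> = 0 \<and> g1 \<theta> \<noteq> 0) (at \<theta>0)"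
  obtains ls where "length ls = Qnum q s" "\<forall>l\<in>set ls. l \<in> O[at \<theta>0](\<lambda>_. 1)"
    "eventually (\<lambda>\<theta>. shift_subs (g1 \<theta> # map (\<lambda>l. l \<theta>) ls)
       (\<lambda>n. gstart q c M s \<epsilon> w n \<theta> - g1 \<theta> ^ n) = (\<lambda>_. 0)) (at \<theta>0)"
proof -
  let ?m = "Suc (Qnum q s)"
  let ?E = "Ehat q c M s \<epsilon>"
  obtain idx where idx: "bij_betw idx {..<?m} (active_moments q s)" and idx0: "idx 0 = 0"
    by (rule active_moments_enumeration[OF q])
  note restriction = Ehat_carrier[OF M inv] idx active_moments_subset Ehat_zero_cols[OF M inv]
  define A where "A \<theta> = restrict_mat idx ?m (?E \<theta>)" for \<theta>
  define x where "x \<theta> = restrict_vec idx ?m (what q w \<theta>)" for \<theta>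
  have bounded: "(\<lambda>\<theta>. A \<theta> $$ (i,j)) \<in> O[at \<theta>0](\<lambda>_. 1)" if "i < ?m" "j < ?m" for i j
    using that by (simp add: A_def restrict_mat_def)
      (intro Ehat_index_bigo_1[OF M inv] restrict_index_less[OF restriction])
  have "eigenvalue (A \<theta>) (g1 \<theta>)" if "Phihat q c M s \<epsilon> (g1 \<theta>) \<theta> = 0" "g1 \<theta> \<noteq> 0" for \<theta>
    unfolding A_def using that
    by (intro eigenvalue_restrict_mat[OF restriction] Phihat_root_eigenvalue[OF M inv])
  then have eigenvalue: "eventually (\<lambda>\<theta>. eigenvalue (A \<theta>) (g1 \<theta>)) (at \<theta>0)"
    using root by (auto elim: eventually_mono)
  obtain ls where ls: "length ls = Qnum q s" "\<forall>l\<in>set ls. l \<in> O[at \<theta>0](\<lambda>_. 1)"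
    and rec: "eventually (\<lambda>\<theta>. shift_subs (g1 \<theta> # map (\<lambda>l. l \<theta>) ls)
      (\<lambda>n. (A \<theta> ^\<^sub>m n *\<^sub>v x \<theta>) $ 0) = (\<lambda>_. 0)) (at \<theta>0)"
  proof (rule matrix_orbit_recurrence[where m = "Qnum q s" and k = 0 and A = A and v = x])
    show "A \<theta> \<in> carrier_mat ?m ?m" "x \<theta> \<in> carrier_vec ?m" for \<theta>
      by (simp_all add: A_def x_def)
    show "0 < ?m"
      by simp
    show "(\<lambda>\<theta>. A \<theta> $$ (i,j)) \<in> O[at \<theta>0](\<lambda>_. 1)" if "i < ?m" "j < ?m" for i j
      using that by (rule bounded)
    show "eventually (\<lambda>\<theta>. eigenvalue (A \<theta>) (g1 \<theta>)) (at \<theta>0)"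
      by (rule eigenvalue)
  qed (rule that)
  have "eventually (\<lambda>\<theta>. shift_subs (g1 \<theta> # map (\<lambda>l. l \<theta>) ls)
      (\<lambda>n. gstart q c M s \<epsilon> w n \<theta> - g1 \<theta> ^ n) = (\<lambda>_. 0)) (at \<theta>0)"
    using rec unfolding A_def x_def gstart_restricted_orbit[OF M inv idx idx0 zero_less_Suc]
    by (elim eventually_mono) (simp only: shift_subs_diff shift_subs_Cons_power, simp)
  with ls show ?thesis
    by (rule that)
qed

lemma gstart_tendsto_1:
  assumes "M \<in> carrier_mat q q" and "invertible_mat M" and "0 < q" and "\<epsilon> 0 = 1"
    and w0: "(laurent_symbol (w 0) \<longlongrightarrow> 1) (at 0)"
  shows "((\<lambda>\<theta>. gstart q c M s \<epsilon> w n \<theta>) \<longlongrightarrow> 1) (at 0)"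
proof -
  have "(laurent_symbol (w 0) \<longlongrightarrow> laurent_symbol (w 0) 0) (at 0)"
    using continuous_laurent_symbol by (simp add: isCont_def)
  then have "laurent_symbol (w 0) 0 = 1"
    using w0 by (rule LIM_unique)
  moreover have "(gstart q c M s \<epsilon> w n \<longlongrightarrow> gstart q c M s \<epsilon> w n 0) (at 0)"
    using continuous_gstart[OF assms(1-3)] by (simp add: isCont_def)
  ultimately show ?thesis
    by (simp add: gstart_at_0[where \<epsilon> = \<epsilon>, OF assms(1-4)])
qed

lemma starting_scheme_bigo:
  assumes M: "M \<in> carrier_mat q q" and inv: "invertible_mat M" and q: "0 < q" and eps: "\<epsilon> 0 = 1"
    and h: "(h \<longlongrightarrow> 0) (at 0)" and g1: "(g1 \<longlongrightarrow> 1) (at 0)"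
    and w0: "(\<lambda>\<theta>. laurent_symbol (w 0) \<theta> - 1) \<in> O[at 0](h)"
    and Ln_diff: "1 \<le> n \<Longrightarrow> (\<lambda>\<theta>. Ln (gstart q c M s \<epsilon> w n \<theta>) - of_nat n * Ln (g1 \<theta>)) \<in> O[at 0](h)"
  shows "(\<lambda>\<theta>. gstart q c M s \<epsilon> w n \<theta> - g1 \<theta> ^ n) \<in> O[at 0](h)"
proof (cases "n = 0")
  case True
  then show ?thesis
    using w0 by (simp add: gstart_0[OF M inv q])
next
  case False
  have "(laurent_symbol (w 0) \<longlongrightarrow> 1) (at 0)"
    by (rule LIM_zero_cancel[OF bigo_tendsto_zero[OF w0 h]])
  then show ?thesis
    using False gstart_tendsto_1[where \<epsilon> = \<epsilon>, OF M inv q eps]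
    by (intro power_diff_bigo_of_Ln_diff_bigo[OF _ g1 h] Ln_diff) auto
qed

theorem proposition3:
  fixes q Q H :: nat
    and c :: "nat \<Rightarrow> int^'d"
    and M :: "real mat"
    and s \<epsilon> :: "nat \<Rightarrow> real"
    and w :: "nat \<Rightarrow> int^'d \<Rightarrow> real"
    and g1 :: "real^'d \<Rightarrow> complex"
  assumes q_pos: "q \<ge> 1"
    and M_dim: "M \<in> carrier_mat q q"
    and M_inv: "invertible_mat M"
    and s_range: "\<And>i. 1 \<le> i \<Longrightarrow> i < q \<Longrightarrow> 0 < s i \<and> s i \<le> 2"
    and eps1: "\<epsilon> 0 = 1"
    and w_laurent: "\<And>i. i < q \<Longrightarrow> finite {k. w i k \<noteq> 0}"
    and Q_def: "Q = Qnum q s"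
    and H_pos: "H \<ge> 1"
    and g1_root: "\<forall>\<^sub>F \<theta> in at 0. Phihat q c M s \<epsilon> (g1 \<theta>) \<theta> = 0"
    and g1_consistent: "(\<lambda>\<theta>. g1 \<theta> - 1) \<in> O[at 0](\<lambda>\<theta>. complex_of_real (norm \<theta>))"
    and w1_hyp: "(\<lambda>\<theta>. laurent_symbol (w 0) \<theta> - 1)
                   \<in> O[at 0](\<lambda>\<theta>. complex_of_real (norm \<theta> ^ (H + 1)))"
    and start_hyp: "\<And>n. 1 \<le> n \<Longrightarrow> n \<le> Q \<Longrightarrow>
        (\<lambda>\<theta>. Ln (gstart q c M s \<epsilon> w n \<theta>) - of_nat n * Ln (g1 \<theta>))
          \<in> O[at 0](\<lambda>\<theta>. complex_of_real (norm \<theta> ^ (H + 1)))"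
  shows "\<forall>n > Q. (\<lambda>\<theta>. gstart q c M s \<epsilon> w n \<theta> - g1 \<theta> ^ n)
                   \<in> O[at 0](\<lambda>\<theta>. complex_of_real (norm \<theta> ^ (H + 1)))"
proof -
  let ?r = "\<lambda>\<theta>::real^'d. complex_of_real (norm \<theta> ^ (H + 1))"
  have q: "0 < q"
    using q_pos by simp
  have r_lim: "(?r \<longlongrightarrow> 0) (at 0)"
    by (rule tendsto_norm_power_zero) simp
  have "((\<lambda>\<theta>::real^'d. complex_of_real (norm \<theta>)) \<longlongrightarrow> 0) (at 0)"
    using tendsto_norm_power_zero[of 1] by simp
  then have g1_lim: "(g1 \<longlongrightarrow> 1) (at 0)"
    by (rule LIM_zero_cancel[OF bigo_tendsto_zero[OF g1_consistent]])
  obtain ls where ls: "length ls = Q" "\<forall>l\<in>set ls. l \<in> O[at 0](\<lambda>_. 1)"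
    and rec: "eventually (\<lambda>\<theta>. shift_subs (g1 \<theta> # map (\<lambda>l. l \<theta>) ls)
      (\<lambda>n. gstart q c M s \<epsilon> w n \<theta> - g1 \<theta> ^ n) = (\<lambda>_. 0)) (at 0)"
  proof (rule gstart_error_recurrence[OF q M_dim M_inv])
    show "eventually (\<lambda>\<theta>. Phihat q c M s \<epsilon> (g1 \<theta>) \<theta> = 0 \<and> g1 \<theta> \<noteq> 0) (at 0)"
      using g1_root tendsto_imp_eventually_ne[OF g1_lim one_neq_zero] by (rule eventually_conj)
  qed (rule that; simp add: Q_def)
  note recurrence = recurrence_bigo[OF tendsto_imp_bigo_1[OF g1_lim] ls(2) rec]
  have init: "(\<lambda>\<theta>. gstart q c M s \<epsilon> w n \<theta> - g1 \<theta> ^ n) \<in> O[at 0](?r)" if "n \<le> length ls" for n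
    using that ls(1)
    by (intro starting_scheme_bigo[where \<epsilon> = \<epsilon> and w = w, OF M_dim M_inv q eps1 r_lim g1_lim w1_hyp]
        start_hyp) auto
  show ?thesis
  proof (intro allI impI)
    fix n
    show "(\<lambda>\<theta>. gstart q c M s \<epsilon> w n \<theta> - g1 \<theta> ^ n) \<in> O[at 0](?r)"
      by (rule recurrence) (use init in auto)
  qed
qed

end
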